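(* For $b\ge0$ and $\lambda>0$, the integral operators $S_b(\mathrm{i}\sqrt\lambda)$ and $T_b(\mathrm{i}\sqrt\lambda)$ on $L^2(E,\mathbb{C}^2)$ with kernels $$S_b(x,x';\sqrt\lambda)=\mathrm{e}^{\mathrm{i} b\phi_2(x,x')}\mathfrak K_0^E(x,x';\sqrt\lambda),\qquad T_b(x,x';\sqrt\lambda)=\mathrm{e}^{\mathrm{i} b\phi_2(x,x')}\big(-b\tilde A(x-x')\cdot\sigma\big)\mathfrak K_0^E(x,x';\sqrt\lambda)$$ are bounded. Moreover, there exists $C>0$ such that for all $b,\lambda>0$, $\|T_b(\mathrm{i}\sqrt\lambda)\|\le C\,b\,\lambda^{-1}$.
   Context: $E=\mathbb{R}\times[0,\infty)$; $\sigma=(\sigma_1,\sigma_2)$ with Pauli matrices $\sigma_1=\begin{pmatrix}0&1\\1&0\end{pmatrix}$, $\sigma_2=\begin{pmatrix}0&-\mathrm{i}\\ \mathrm{i}&0\end{pmatrix}$; $\tilde A(x)=(-x_2,0)$; $\phi_2(x,x')=(x_1'-x_1)x_2'$. With $K_0$ the Macdonald function of order zero, $\mathfrak K_0(x,x';\sqrt\lambda)=\tfrac{\mathrm{i}\sqrt\lambda}{2\pi}K_0(\sqrt\lambda|x-x'|)I_2-\tfrac{\mathrm{i}\sqrt\lambda}{2\pi}\sigma\cdot\tfrac{x-x'}{|x-x'|}K_0'(\sqrt\lambda|x-x'|)$ (the kernel of $(-\mathrm{i}\nabla\cdot\sigma-\mathrm{i}\sqrt\lambda)^{-1}$ on $\mathbb{R}^2$),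 and $\mathfrak K_0^E(x,x';\sqrt\lambda)=\mathfrak K_0(x;(x_1',-x_2');\sqrt\lambda)\sigma_1+\mathfrak K_0(x,x';\sqrt\lambda)$ for $x,x'\in E$. *)

theory Defs
  imports "HOL-Analysis.Analysis"
begin

definition E :: "(real^2) set" where
  "E = {x. x$2 \<ge> 0}"

definition pauli1 :: "complex^2^2" where
  "pauli1 = vector [vector [0, 1], vector [1, 0]]"

definition pauli2 :: "complex^2^2" where
  "pauli2 = vector [vector [0, -\<i>], vector [\<i>, 0]]"

definition cscale :: "complex \<Rightarrow> complex^2^2 \<Rightarrow> complex^2^2" (infixr "*c" 75) where
  "c *c A = (\<chi> i j. c * A$i$j)"

definition id2 :: "complex^2^2" where
  "id2 = mat 1"

definition sigma_dot :: "real^2 \<Rightarrow> complex^2^2" where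
  "sigma_dot v = (v$1) *\<^sub>R pauli1 + (v$2) *\<^sub>R pauli2"

definition K0 :: "real \<Rightarrow> real" where
  "K0 r = (LBINT t:{0..}. exp (- r * cosh t))"

definition K0' :: "real \<Rightarrow> real" where
  "K0' r = deriv K0 r"

definition Atilde :: "real^2 \<Rightarrow> real^2" where
  "Atilde x = vector [- (x$2), 0]"

definition phi2 :: "real^2 \<Rightarrow> real^2 \<Rightarrow> real" where
  "phi2 x x' = (x'$1 - x$1) * x'$2"

text \<open>Kernel of (-i nabla.sigma - i s)^{-1} on R^2, with s = sqrt lambda.\<close>
definition Kfrak0 :: "real^2 \<Rightarrow> real^2 \<Rightarrow> real \<Rightarrow> complex^2^2" where
  "Kfrak0 x x' s =
     (\<i> * complex_of_real s / (2 * complex_of_real pi) * complex_of_real (K0 (s * norm (x - x')))) *c id2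
   - (\<i> * complex_of_real s / (2 * complex_of_real pi) * complex_of_real (K0' (s * norm (x - x'))))
       *c sigma_dot ((1 / norm (x - x')) *\<^sub>R (x - x'))"

definition reflect2 :: "real^2 \<Rightarrow> real^2" where
  "reflect2 x' = vector [x'$1, - (x'$2)]"

definition KfrakE :: "real^2 \<Rightarrow> real^2 \<Rightarrow> real \<Rightarrow> complex^2^2" where
  "KfrakE x x' s = Kfrak0 x (reflect2 x') s ** pauli1 + Kfrak0 x x' s"

definition S_kernel :: "real \<Rightarrow> real \<Rightarrow> real^2 \<Rightarrow> real^2 \<Rightarrow> complex^2^2" where
  "S_kernel b s x x' = exp (\<i> * complex_of_real (b * phi2 x x')) *c KfrakE x x' s"

definition T_kernel :: "real \<Rightarrow> real \<Rightarrow> real^2 \<Rightarrow> real^2 \<Rightarrow> complex^2^2" where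
  "T_kernel b s x x' = exp (\<i> * complex_of_real (b * phi2 x x'))
      *c (sigma_dot (- b *\<^sub>R Atilde (x - x')) ** KfrakE x x' s)"

definition L2 :: "(real^2) set \<Rightarrow> (real^2 \<Rightarrow> complex^2) set" where
  "L2 S = {f. f \<in> borel_measurable (lebesgue_on S) \<and>
              integrable (lebesgue_on S) (\<lambda>x. (norm (f x))^2)}"

definition L2norm :: "(real^2) set \<Rightarrow> (real^2 \<Rightarrow> complex^2) \<Rightarrow> real" where
  "L2norm S f = sqrt (\<integral>x. (norm (f x))^2 \<partial>lebesgue_on S)"

definition int_op :: "(real^2) set \<Rightarrow> (real^2 \<Rightarrow> real^2 \<Rightarrow> complex^2^2)
                       \<Rightarrow> (real^2 \<Rightarrow> complex^2) \<Rightarrow> real^2 \<Rightarrow> complex^2" where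
  "int_op S K f = (\<lambda>x. \<integral>x'. K x x' *v f x' \<partial>lebesgue_on S)"

definition bounded_int_op :: "(real^2) set \<Rightarrow> (real^2 \<Rightarrow> real^2 \<Rightarrow> complex^2^2) \<Rightarrow> real \<Rightarrow> bool" where
  "bounded_int_op S K M \<longleftrightarrow>
     (\<forall>f \<in> L2 S.
        (AE x in lebesgue_on S. integrable (lebesgue_on S) (\<lambda>x'. K x x' *v f x')) \<and>
        int_op S K f \<in> L2 S \<and>
        L2norm S (int_op S K f) \<le> M * L2norm S f)"

end

theory Submission
  imports Defs
begin

text \<open>
  With \<open>y = x - x'\<close> and \<open>s = sqrt \<lambda>\<close>, both kernels are dominated entrywise by functions of
  \<open>y\<close> alone: the bounds \<open>|K0 r|, |K0' r| \<le> 2 exp (-r/2) / r\<close> and \<open>|x - x'| \<le> |x - reflect2 x'|\<close>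
  on \<open>E\<close> bound \<open>S_b\<close> by a multiple of \<open>exp (-s|y|/2) / |y|\<close>, while in \<open>T_b\<close> the factor
  \<open>|Atilde y| \<le> |y|\<close> cancels the singularity, leaving \<open>b exp (-s|y|/2)\<close> up to a constant.
  Both majorants are integrable on the plane, the second with integral \<open>O(b/s\<^sup>2) = O(b/\<lambda>)\<close>.
  By the Schur test (Young's inequality for \<open>L\<^sup>1 * L\<^sup>2\<close>), an integral operator whose kernel is
  dominated by \<open>k (x - x')\<close> has norm at most \<open>\<parallel>k\<parallel>\<^sub>1\<close>.
\<close>

section \<open>Entrywise l1-norm of matrices\<close>

definition mat_l1_norm :: "'a::real_normed_vector^'n^'m \<Rightarrow> real" where
  "mat_l1_norm A = (\<Sum>i\<in>UNIV. \<Sum>j\<in>UNIV. norm (A$i$j))"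

lemma mat_l1_norm_nonneg: "0 \<le> mat_l1_norm A"
  unfolding mat_l1_norm_def by (intro sum_nonneg) auto

lemma norm_mat_vec_le:
  fixes A :: "'a::real_normed_algebra_1^'n^'m"
  shows "norm (A *v v) \<le> mat_l1_norm A * norm v"
proof -
  have "norm ((A *v v)$i) \<le> (\<Sum>j\<in>UNIV. norm (A$i$j)) * norm v" for i
  proof -
    have "norm ((A *v v)$i) \<le> (\<Sum>j\<in>UNIV. norm (A$i$j) * norm (v$j))"
      unfolding matrix_vector_mult_def
      by (simp add: order_trans[OF norm_sum sum_mono[OF norm_mult_ineq]])
    also have "\<dots> \<le> (\<Sum>j\<in>UNIV. norm (A$i$j) * norm v)"
      by (intro sum_mono mult_left_mono Finite_Cartesian_Product.norm_nth_le) auto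
    finally show ?thesis by (simp add: sum_distrib_right)
  qed
  then have "(\<Sum>i\<in>UNIV. norm ((A *v v)$i)) \<le> mat_l1_norm A * norm v"
    unfolding mat_l1_norm_def sum_distrib_right by (rule sum_mono)
  moreover have "norm (A *v v) \<le> (\<Sum>i\<in>UNIV. norm ((A *v v)$i))"
    unfolding norm_vec_def by (rule L2_set_le_sum) auto
  ultimately show ?thesis by linarith
qed

lemma mat_l1_norm_mult:
  fixes A :: "'a::real_normed_algebra_1^'n^'m" and B :: "'a^'p^'n"
  shows "mat_l1_norm (A ** B) \<le> mat_l1_norm A * mat_l1_norm B"
proof -
  have row: "(\<Sum>j\<in>UNIV. norm (B$k$j)) \<le> mat_l1_norm B" for k
    unfolding mat_l1_norm_def by (rule member_le_sum) (auto intro: sum_nonneg)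
  have "mat_l1_norm (A ** B) \<le> (\<Sum>i\<in>UNIV. \<Sum>j\<in>UNIV. \<Sum>k\<in>UNIV. norm (A$i$k) * norm (B$k$j))"
    unfolding mat_l1_norm_def matrix_matrix_mult_def
    by (intro sum_mono) (simp add: order_trans[OF norm_sum sum_mono[OF norm_mult_ineq]])
  also have "\<dots> = (\<Sum>i\<in>UNIV. \<Sum>k\<in>UNIV. norm (A$i$k) * (\<Sum>j\<in>UNIV. norm (B$k$j)))"
    by (simp add: sum.swap[of _ "UNIV::'p set"] sum_distrib_left)
  also have "\<dots> \<le> (\<Sum>i\<in>UNIV. \<Sum>k\<in>UNIV. norm (A$i$k) * mat_l1_norm B)"
    by (intro sum_mono mult_left_mono row) auto
  also have "\<dots> = mat_l1_norm A * mat_l1_norm B"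
    by (simp add: mat_l1_norm_def sum_distrib_right)
  finally show ?thesis .
qed

lemma mat_l1_norm_add: "mat_l1_norm (A + B) \<le> mat_l1_norm A + mat_l1_norm B"
  unfolding mat_l1_norm_def sum.distrib[symmetric] by (intro sum_mono) (simp add: norm_triangle_ineq)

lemma mat_l1_norm_diff: "mat_l1_norm (A - B) \<le> mat_l1_norm A + mat_l1_norm B"
  unfolding mat_l1_norm_def sum.distrib[symmetric] by (intro sum_mono) (simp add: norm_triangle_ineq4)

lemma mat_l1_norm_scaleR: "mat_l1_norm (r *\<^sub>R A) = \<bar>r\<bar> * mat_l1_norm A"
  by (simp add: mat_l1_norm_def sum_distrib_left)

lemma mat_l1_norm_2x2:
  "mat_l1_norm (A :: 'a::real_normed_vector^2^2) = norm (A$1$1) + norm (A$1$2) + norm (A$2$1) + norm (A$2$2)"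
  by (simp add: mat_l1_norm_def sum_2)

lemma mat_l1_norm_cscale: "mat_l1_norm (c *c A) = norm c * mat_l1_norm A"
  by (simp add: mat_l1_norm_def cscale_def norm_mult sum_distrib_left)

lemma mat_l1_norm_id2: "mat_l1_norm id2 = 2"
  unfolding mat_l1_norm_2x2 id2_def by (simp add: mat_def)

lemma mat_l1_norm_pauli1: "mat_l1_norm pauli1 = 2"
  unfolding mat_l1_norm_2x2 pauli1_def by simp

lemma mat_l1_norm_sigma_dot: "mat_l1_norm (sigma_dot v) \<le> 2 * (\<bar>v$1\<bar> + \<bar>v$2\<bar>)"
proof -
  have "mat_l1_norm pauli2 = 2" unfolding mat_l1_norm_2x2 pauli2_def by simp
  then show ?thesis
    using mat_l1_norm_add[of "(v$1) *\<^sub>R pauli1" "(v$2) *\<^sub>R pauli2"]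
    by (simp add: sigma_dot_def mat_l1_norm_scaleR mat_l1_norm_pauli1)
qed

lemma mat_l1_norm_sigma_dot_unit:
  assumes "norm u = 1"
  shows "mat_l1_norm (sigma_dot u) \<le> 4"
proof -
  have "\<bar>u$1\<bar> \<le> 1" "\<bar>u$2\<bar> \<le> 1"
    using component_le_norm_cart[of u] assms by metis+
  then have "2 * (\<bar>u$1\<bar> + \<bar>u$2\<bar>) \<le> 2 * (1 + 1)"
    by (intro mult_left_mono add_mono) auto
  from order_trans[OF mat_l1_norm_sigma_dot this] show ?thesis by simp
qed

lemma borel_measurable_mat_vec [measurable (raw)]:
  fixes A :: "'a \<Rightarrow> complex^2^2" and v :: "'a \<Rightarrow> complex^2"
  assumes "A \<in> borel_measurable N" "v \<in> borel_measurable N"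
  shows "(\<lambda>z. A z *v v z) \<in> borel_measurable N"
proof -
  have "continuous_on UNIV (\<lambda>p::(complex^2^2) \<times> (complex^2). fst p *v snd p)"
    unfolding matrix_vector_mult_def by (intro continuous_intros)
  from borel_measurable_continuous_Pair[OF assms this] show ?thesis by simp
qed

lemma borel_measurable_cscale [measurable (raw)]:
  assumes "c \<in> borel_measurable N" "A \<in> borel_measurable N"
  shows "(\<lambda>z. c z *c A z) \<in> borel_measurable N"
proof -
  have "continuous_on UNIV (\<lambda>p::complex \<times> (complex^2^2). fst p *c snd p)"
    unfolding cscale_def by (intro continuous_intros)
  from borel_measurable_continuous_Pair[OF assms this] show ?thesis by simp
qed

lemma borel_measurable_mat_mult [measurable (raw)]:
  fixes A B :: "'a \<Rightarrow> complex^2^2"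
  assumes "A \<in> borel_measurable N" "B \<in> borel_measurable N"
  shows "(\<lambda>z. A z ** B z) \<in> borel_measurable N"
proof -
  have "continuous_on UNIV (\<lambda>p::(complex^2^2) \<times> (complex^2^2). fst p ** snd p)"
    unfolding matrix_matrix_mult_def by (intro continuous_intros)
  from borel_measurable_continuous_Pair[OF assms this] show ?thesis by simp
qed

lemma borel_measurable_vec_nth [measurable (raw)]:
  fixes f :: "'a \<Rightarrow> real^'n"
  shows "f \<in> borel_measurable M \<Longrightarrow> (\<lambda>x. f x $ i) \<in> borel_measurable M"
  by (erule measurable_compose[of f M borel "\<lambda>y. y$i"])
     (intro borel_measurable_continuous_onI continuous_intros)

section \<open>Schur test for kernels dominated by a convolution\<close>

lemma borel_measurable_ident_lebesgue_on:
  "(\<lambda>x. x) \<in> borel_measurable (lebesgue_on (S::'a::euclidean_space set))"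
  by (intro measurable_restrict_space1 measurable_completion measurable_ident_sets) simp

lemma sigma_finite_lebesgue_on:
  assumes "S \<in> sets lebesgue"
  shows "sigma_finite_measure (lebesgue_on (S::'a::euclidean_space set))"
proof -
  obtain A where A: "countable A" "A \<subseteq> sets (lborel::'a measure)" "\<Union>A = space (lborel::'a measure)"
      "\<forall>a\<in>A. emeasure lborel a \<noteq> \<infinity>"
    using sigma_finite_lborel unfolding sigma_finite_measure_def by blast
  then have "sigma_finite_measure (completion (lborel::'a measure))"
    unfolding sigma_finite_measure_def by (intro exI[of _ A]) auto
  then show ?thesis
    by (rule sigma_finite_measure_restrict_space) (use assms in simp)
qed

lemma nn_integral_lebesgue_on_affine_le:
  fixes h :: "'a::euclidean_space \<Rightarrow> ennreal"
  assumes [measurable]: "h \<in> borel_measurable borel" and S: "S \<in> sets borel" and c: "\<bar>c\<bar> = 1"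
  shows "(\<integral>\<^sup>+y. h (t + c *\<^sub>R y) \<partial>lebesgue_on S) \<le> (\<integral>\<^sup>+y. h y \<partial>lborel)"
proof -
  have "(\<integral>\<^sup>+y. h (t + c *\<^sub>R y) \<partial>lebesgue_on S) = (\<integral>\<^sup>+y. h (t + c *\<^sub>R y) * indicator S y \<partial>lborel)"
    using S by (simp add: nn_integral_restrict_space nn_integral_completion)
  also have "\<dots> \<le> (\<integral>\<^sup>+y. h (t + c *\<^sub>R y) \<partial>lborel)"
    by (intro nn_integral_mono) (auto simp: indicator_def)
  also have "\<dots> = (\<integral>\<^sup>+y. h y \<partial>lborel)"
    using c by (subst lborel_affine[of c t]) (auto simp: nn_integral_density nn_integral_distr)
  finally show ?thesis .
qed

lemma nn_integral_convolution_square_le: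
  fixes k g :: "'a::euclidean_space \<Rightarrow> real"
  assumes S: "S \<in> sets borel"
    and [measurable]: "k \<in> borel_measurable borel" and k_nonneg: "\<And>y. 0 \<le> k y"
    and k_int: "(\<integral>\<^sup>+y. k y \<partial>lborel) \<le> ennreal A"
    and [measurable]: "g \<in> borel_measurable (lebesgue_on S)" and g_nonneg: "\<And>x. 0 \<le> g x"
  shows "(\<integral>\<^sup>+x. (\<integral>\<^sup>+x'. ennreal (k (x - x') * g x') \<partial>lebesgue_on S)^2 \<partial>lebesgue_on S)
           \<le> ennreal A ^ 2 * (\<integral>\<^sup>+x. ennreal (g x ^ 2) \<partial>lebesgue_on S)"
proof -
  define M where "M = lebesgue_on S"
  interpret pair_sigma_finite M M
    unfolding M_def pair_sigma_finite_def using S by (auto intro: sigma_finite_lebesgue_on)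
  have [measurable]: "(\<lambda>x. x) \<in> borel_measurable M" and [measurable]: "g \<in> borel_measurable M"
    by (simp_all add: M_def borel_measurable_ident_lebesgue_on)
  have int1: "(\<integral>\<^sup>+x'. ennreal (k (x - x')) \<partial>M) \<le> ennreal A" for x
    using nn_integral_lebesgue_on_affine_le[of "\<lambda>y. ennreal (k y)" S "-1" x] S k_int
    unfolding M_def by simp
  have int2: "(\<integral>\<^sup>+x. ennreal (k (x - x')) \<partial>M) \<le> ennreal A" for x'
    using nn_integral_lebesgue_on_affine_le[of "\<lambda>y. ennreal (k y)" S 1 "- x'"] S k_int
    unfolding M_def by simp
  \<comment> \<open>Cauchy--Schwarz for the splitting \<open>k g = sqrt k \<cdot> (sqrt k g)\<close>\<close>
  have CS: "(\<integral>\<^sup>+x'. ennreal (k (x - x') * g x') \<partial>M)^2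
      \<le> ennreal A * (\<integral>\<^sup>+x'. ennreal (k (x - x') * g x' ^ 2) \<partial>M)" for x
  proof -
    have "(\<integral>\<^sup>+x'. ennreal (k (x - x') * g x') \<partial>M)^2
        = (\<integral>\<^sup>+x'. ennreal (sqrt (k (x - x'))) * ennreal (sqrt (k (x - x')) * g x') \<partial>M)^2"
      by (intro arg_cong[where f="\<lambda>z. z^2"] nn_integral_cong)
         (simp add: ennreal_mult'[symmetric] k_nonneg g_nonneg mult.assoc[symmetric] real_sqrt_mult[symmetric])
    also have "\<dots> \<le> (\<integral>\<^sup>+x'. ennreal (sqrt (k (x - x'))) ^ 2 \<partial>M) *
                    (\<integral>\<^sup>+x'. ennreal (sqrt (k (x - x')) * g x') ^ 2 \<partial>M)"
      by (rule Cauchy_Schwarz_nn_integral) measurable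
    also have "\<dots> = (\<integral>\<^sup>+x'. ennreal (k (x - x')) \<partial>M) * (\<integral>\<^sup>+x'. ennreal (k (x - x') * g x' ^ 2) \<partial>M)"
      by (intro arg_cong2[where f="(*)"] nn_integral_cong)
         (simp_all add: ennreal_power k_nonneg g_nonneg power_mult_distrib)
    also have "\<dots> \<le> ennreal A * (\<integral>\<^sup>+x'. ennreal (k (x - x') * g x' ^ 2) \<partial>M)"
      by (intro mult_right_mono int1) simp
    finally show ?thesis .
  qed
  have "(\<integral>\<^sup>+x. (\<integral>\<^sup>+x'. ennreal (k (x - x') * g x' ^ 2) \<partial>M) \<partial>M)
      = (\<integral>\<^sup>+x'. ennreal (g x' ^ 2) * (\<integral>\<^sup>+x. ennreal (k (x - x')) \<partial>M) \<partial>M)"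
    by (subst Fubini') (auto intro!: nn_integral_cong
        simp: nn_integral_cmult[symmetric] ennreal_mult'[symmetric] k_nonneg mult.commute)
  also have "\<dots> \<le> (\<integral>\<^sup>+x'. ennreal (g x' ^ 2) * ennreal A \<partial>M)"
    by (intro nn_integral_mono mult_left_mono int2) auto
  finally have Fubini_bound:
    "(\<integral>\<^sup>+x. (\<integral>\<^sup>+x'. ennreal (k (x - x') * g x' ^ 2) \<partial>M) \<partial>M)
       \<le> ennreal A * (\<integral>\<^sup>+x. ennreal (g x ^ 2) \<partial>M)"
    by (simp add: nn_integral_cmult mult.commute)
  have "(\<integral>\<^sup>+x. (\<integral>\<^sup>+x'. ennreal (k (x - x') * g x') \<partial>M)^2 \<partial>M)
      \<le> (\<integral>\<^sup>+x. ennreal A * (\<integral>\<^sup>+x'. ennreal (k (x - x') * g x' ^ 2) \<partial>M) \<partial>M)"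
    by (intro nn_integral_mono CS)
  also have "\<dots> = ennreal A * (\<integral>\<^sup>+x. (\<integral>\<^sup>+x'. ennreal (k (x - x') * g x' ^ 2) \<partial>M) \<partial>M)"
    by (rule nn_integral_cmult) measurable
  also have "\<dots> \<le> ennreal A ^ 2 * (\<integral>\<^sup>+x. ennreal (g x ^ 2) \<partial>M)"
    using mult_left_mono[OF Fubini_bound, of "ennreal A"] by (simp add: power2_eq_square mult.assoc)
  finally show ?thesis unfolding M_def .
qed

lemma L2_L2norm_le_of_nn_integral_le:
  assumes [measurable]: "T \<in> borel_measurable (lebesgue_on S)" and f: "f \<in> L2 S" and A: "0 \<le> A"
    and le: "(\<integral>\<^sup>+x. ennreal (norm (T x) ^ 2) \<partial>lebesgue_on S)
               \<le> ennreal A ^ 2 * (\<integral>\<^sup>+x. ennreal (norm (f x) ^ 2) \<partial>lebesgue_on S)"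
  shows "T \<in> L2 S" and "L2norm S T \<le> A * L2norm S f"
proof -
  have "integrable (lebesgue_on S) (\<lambda>x. norm (f x) ^ 2)" using f by (simp add: L2_def)
  then have f_fin: "(\<integral>\<^sup>+x. ennreal (norm (f x) ^ 2) \<partial>lebesgue_on S) < \<infinity>"
    by (simp add: integrable_iff_bounded)
  then have T_fin: "(\<integral>\<^sup>+x. ennreal (norm (T x) ^ 2) \<partial>lebesgue_on S) < \<infinity>"
    using le by (auto simp: ennreal_mult_less_top power_less_top_ennreal intro: order_le_less_trans)
  then show "T \<in> L2 S" by (simp add: L2_def integrable_iff_bounded)
  have "(\<integral>x. norm (T x) ^ 2 \<partial>lebesgue_on S)
      = enn2real (\<integral>\<^sup>+x. ennreal (norm (T x) ^ 2) \<partial>lebesgue_on S)"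
    by (rule integral_eq_nn_integral) auto
  also have "\<dots> \<le> enn2real (ennreal A ^ 2 * (\<integral>\<^sup>+x. ennreal (norm (f x) ^ 2) \<partial>lebesgue_on S))"
    using le f_fin by (intro enn2real_mono) (auto simp: ennreal_mult_less_top power_less_top_ennreal)
  also have "\<dots> = A ^ 2 * (\<integral>x. norm (f x) ^ 2 \<partial>lebesgue_on S)"
    using A f by (simp add: L2_def enn2real_mult ennreal_power integral_eq_nn_integral[OF borel_measurable_integrable])
  finally have "sqrt (\<integral>x. norm (T x) ^ 2 \<partial>lebesgue_on S)
      \<le> sqrt (A ^ 2 * (\<integral>x. norm (f x) ^ 2 \<partial>lebesgue_on S))"
    by (rule real_sqrt_le_mono)
  then show "L2norm S T \<le> A * L2norm S f"
    unfolding L2norm_def using A by (simp add: real_sqrt_mult)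
qed

lemma integrable_mat_vec_dominated:
  fixes K :: "'a \<Rightarrow> complex^2^2" and f :: "'a \<Rightarrow> complex^2"
  assumes [measurable]: "(\<lambda>y. K y *v f y) \<in> borel_measurable M"
    and dom: "AE y in M. mat_l1_norm (K y) \<le> k y"
    and fin: "(\<integral>\<^sup>+y. ennreal (k y * norm (f y)) \<partial>M) < \<infinity>"
  shows "integrable M (\<lambda>y. K y *v f y)"
    and "ennreal (norm (\<integral>y. K y *v f y \<partial>M)) \<le> (\<integral>\<^sup>+y. ennreal (k y * norm (f y)) \<partial>M)"
proof -
  have "(\<integral>\<^sup>+y. ennreal (norm (K y *v f y)) \<partial>M) \<le> (\<integral>\<^sup>+y. ennreal (k y * norm (f y)) \<partial>M)"
  proof (rule nn_integral_mono_AE)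
    show "AE y in M. ennreal (norm (K y *v f y)) \<le> ennreal (k y * norm (f y))"
      using dom
    proof eventually_elim
      case (elim y)
      then show ?case
        using norm_mat_vec_le[of "K y" "f y"] mult_right_mono[OF elim norm_ge_zero[of "f y"]]
        by (intro ennreal_leI) linarith
    qed
  qed
  then show int: "integrable M (\<lambda>y. K y *v f y)"
    using fin by (simp add: integrable_iff_bounded)
  show "ennreal (norm (\<integral>y. K y *v f y \<partial>M)) \<le> (\<integral>\<^sup>+y. ennreal (k y * norm (f y)) \<partial>M)"
    by (rule order_trans[OF integral_norm_bound_ennreal[OF int]]) fact
qed

lemma borel_measurable_int_op:
  assumes S: "S \<in> sets lebesgue"
    and [measurable]: "(\<lambda>p. K (fst p) (snd p)) \<in> borel_measurable (lebesgue_on S \<Otimes>\<^sub>M lebesgue_on S)"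
    and [measurable]: "f \<in> borel_measurable (lebesgue_on S)"
  shows "int_op S K f \<in> borel_measurable (lebesgue_on S)"
proof -
  interpret sigma_finite_measure "lebesgue_on S" using S by (rule sigma_finite_lebesgue_on)
  show ?thesis
    unfolding int_op_def by (rule borel_measurable_lebesgue_integral) (simp add: case_prod_beta')
qed

lemma int_op_integrable_norm_le:
  assumes [measurable]: "(\<lambda>p. K (fst p) (snd p)) \<in> borel_measurable (lebesgue_on S \<Otimes>\<^sub>M lebesgue_on S)"
    and [measurable]: "f \<in> borel_measurable (lebesgue_on S)" and x: "x \<in> S"
    and dom: "AE x' in lebesgue_on S. mat_l1_norm (K x x') \<le> k x'"
    and fin: "(\<integral>\<^sup>+x'. ennreal (k x' * norm (f x')) \<partial>lebesgue_on S) < \<infinity>"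
  shows "integrable (lebesgue_on S) (\<lambda>x'. K x x' *v f x')"
    and "ennreal (norm (int_op S K f x)) \<le> (\<integral>\<^sup>+x'. ennreal (k x' * norm (f x')) \<partial>lebesgue_on S)"
proof -
  have "(\<lambda>x'. K x x' *v f x') \<in> borel_measurable (lebesgue_on S)"
    using x measurable_Pair2[of "\<lambda>p. K (fst p) (snd p) *v f (snd p)"] by simp
  from integrable_mat_vec_dominated[OF this dom fin]
  show "integrable (lebesgue_on S) (\<lambda>x'. K x x' *v f x')"
    and "ennreal (norm (int_op S K f x)) \<le> (\<integral>\<^sup>+x'. ennreal (k x' * norm (f x')) \<partial>lebesgue_on S)"
    unfolding int_op_def by simp_all
qed

lemma bounded_int_op_convolution_dominated:
  fixes K :: "real^2 \<Rightarrow> real^2 \<Rightarrow> complex^2^2" and k :: "real^2 \<Rightarrow> real"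
  assumes S: "S \<in> sets borel"
    and K_meas: "(\<lambda>p. K (fst p) (snd p)) \<in> borel_measurable (lebesgue_on S \<Otimes>\<^sub>M lebesgue_on S)"
    and [measurable]: "k \<in> borel_measurable borel" and k_nonneg: "\<And>y. 0 \<le> k y"
    and k_int: "(\<integral>\<^sup>+y. k y \<partial>lborel) \<le> ennreal A" and A: "0 \<le> A"
    and dom: "\<And>x. x \<in> S \<Longrightarrow> AE x' in lebesgue_on S. mat_l1_norm (K x x') \<le> k (x - x')"
  shows "bounded_int_op S K A"
  unfolding bounded_int_op_def
proof
  fix f assume f: "f \<in> L2 S"
  define M where "M = lebesgue_on S"
  interpret sigma_finite_measure M unfolding M_def using S by (intro sigma_finite_lebesgue_on) simp
  have [measurable]: "f \<in> borel_measurable M" "(\<lambda>x. x) \<in> borel_measurable M"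
    "(\<lambda>p. K (fst p) (snd p)) \<in> borel_measurable (M \<Otimes>\<^sub>M M)"
    using f K_meas by (auto simp: M_def L2_def borel_measurable_ident_lebesgue_on)
  define \<Phi> where "\<Phi> x = (\<integral>\<^sup>+x'. ennreal (k (x - x') * norm (f x')) \<partial>M)" for x
  have \<Phi>_sq: "(\<integral>\<^sup>+x. \<Phi> x ^ 2 \<partial>M) \<le> ennreal A ^ 2 * (\<integral>\<^sup>+x. ennreal (norm (f x) ^ 2) \<partial>M)"
    unfolding \<Phi>_def M_def using S k_int k_nonneg f
    by (intro nn_integral_convolution_square_le) (auto simp: L2_def)
  have "(\<integral>\<^sup>+x. ennreal (norm (f x) ^ 2) \<partial>M) < \<infinity>"
    using f by (simp add: M_def L2_def integrable_iff_bounded)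
  then have "(\<integral>\<^sup>+x. \<Phi> x ^ 2 \<partial>M) < \<infinity>"
    using \<Phi>_sq by (auto simp: ennreal_mult_less_top power_less_top_ennreal intro: order_le_less_trans)
  then have "AE x in M. \<Phi> x ^ 2 \<noteq> \<infinity>"
    by (intro nn_integral_PInf_AE) (auto simp: \<Phi>_def)
  then have pointwise: "AE x in M. integrable M (\<lambda>x'. K x x' *v f x') \<and>
      ennreal (norm (int_op S K f x)) \<le> \<Phi> x"
    using AE_space
  proof eventually_elim
    case (elim x)
    then have x: "x \<in> S" and fin: "\<Phi> x < \<infinity>"
      by (simp_all add: M_def power_eq_top_ennreal top.not_eq_extremum)
    have "f \<in> borel_measurable (lebesgue_on S)" using f by (simp add: L2_def)
    from int_op_integrable_norm_le[OF K_meas this x dom[OF x] fin[unfolded \<Phi>_def M_def]]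
    show ?case unfolding \<Phi>_def M_def by simp
  qed
  have "(\<integral>\<^sup>+x. ennreal (norm (int_op S K f x) ^ 2) \<partial>M) \<le> (\<integral>\<^sup>+x. \<Phi> x ^ 2 \<partial>M)"
    using pointwise by (intro nn_integral_mono_AE) (auto simp: power_mono simp flip: ennreal_power)
  with borel_measurable_int_op[OF _ K_meas] S f
  have "int_op S K f \<in> L2 S" "L2norm S (int_op S K f) \<le> A * L2norm S f"
    using L2_L2norm_le_of_nn_integral_le[OF _ f A] order_trans[OF _ \<Phi>_sq] unfolding M_def
    by (auto simp: L2_def)
  moreover have "AE x in lebesgue_on S. integrable (lebesgue_on S) (\<lambda>x'. K x x' *v f x')"
    using pointwise unfolding M_def by (rule eventually_mono) simp
  ultimately show "(AE x in lebesgue_on S. integrable (lebesgue_on S) (\<lambda>x'. K x x' *v f x')) \<and>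
      int_op S K f \<in> L2 S \<and> L2norm S (int_op S K f) \<le> A * L2norm S f"
    by blast
qed

section \<open>The Macdonald functions K0 and K1\<close>

lemma tendsto_exp_neg_mult_at_top:
  fixes g :: "'a \<Rightarrow> real"
  assumes "0 < a" and "filterlim g at_top F"
  shows "((\<lambda>t. exp (- a * g t)) \<longlongrightarrow> 0) F"
  by (rule filterlim_compose[OF exp_at_bot filterlim_tendsto_neg_mult_at_bot[OF tendsto_const]])
     (use assms in auto)

lemma nn_integral_exp_neg:
  assumes a: "0 < a"
  shows "(\<integral>\<^sup>+t. ennreal (exp (- a * t)) * indicator {0..} t \<partial>lborel) = ennreal (1 / a)"
proof -
  have "(\<integral>\<^sup>+t. ennreal (exp (- a * t)) * indicator {0..} t \<partial>lborel) = ennreal (0 - (- exp (- a * 0) / a))"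
  proof (rule nn_integral_FTC_atLeast)
    show "DERIV (\<lambda>t. - exp (- a * t) / a) x :> exp (- a * x)" for x
      using a by (auto intro!: derivative_eq_intros simp: field_simps)
    show "((\<lambda>t. - exp (- a * t) / a) \<longlongrightarrow> 0) at_top"
      using tendsto_minus[OF tendsto_divide_zero[OF tendsto_exp_neg_mult_at_top[OF a filterlim_ident]]]
      by simp
  qed auto
  then show ?thesis by simp
qed

lemma nn_integral_exp_exp_neg:
  assumes a: "0 < a"
  shows "(\<integral>\<^sup>+t. ennreal (exp t * exp (- a * exp t)) * indicator {0..} t \<partial>lborel) = ennreal (exp (- a) / a)"
proof -
  have "(\<integral>\<^sup>+t. ennreal (exp t * exp (- a * exp t)) * indicator {0..} t \<partial>lborel)
      = ennreal (0 - (- exp (- a * exp 0) / a))"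
  proof (rule nn_integral_FTC_atLeast)
    show "DERIV (\<lambda>t. - exp (- a * exp t) / a) x :> exp x * exp (- a * exp x)" for x
      using a by (auto intro!: derivative_eq_intros simp: field_simps)
    show "((\<lambda>t. - exp (- a * exp t) / a) \<longlongrightarrow> 0) at_top"
      using tendsto_minus[OF tendsto_divide_zero[OF tendsto_exp_neg_mult_at_top[OF a exp_at_top]]]
      by simp
  qed auto
  then show ?thesis by simp
qed

lemma borel_measurable_cosh [measurable]: "cosh \<in> borel_measurable (borel :: real measure)"
  by (intro borel_measurable_continuous_onI continuous_intros)

definition K1 :: "real \<Rightarrow> real" where
  "K1 r = (LBINT t:{0..}. cosh t * exp (- r * cosh t))"

lemma borel_measurable_K0 [measurable]: "K0 \<in> borel_measurable borel"
  unfolding K0_def[abs_def] set_lebesgue_integral_def by measurable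

lemma borel_measurable_K1 [measurable]: "K1 \<in> borel_measurable borel"
  unfolding K1_def[abs_def] set_lebesgue_integral_def by measurable

lemma cosh_exp_neg_cosh_le:
  fixes r t :: real
  assumes "0 < r" "0 \<le> t"
  shows "cosh t * exp (- r * cosh t) \<le> exp t * exp (- (r/2) * exp t)"
proof (rule mult_mono)
  show "cosh t \<le> exp t" using assms(2) by (simp add: cosh_def)
  have "exp t / 2 \<le> cosh t" by (simp add: cosh_def divide_right_mono)
  then show "exp (- r * cosh t) \<le> exp (- (r/2) * exp t)" using assms(1) by simp
qed auto

lemma set_integral_dominated_by_K1_integrand:
  fixes h :: "real \<Rightarrow> real"
  assumes r: "0 < r" and [measurable]: "h \<in> borel_measurable borel"
    and h: "\<And>t. 0 \<le> t \<Longrightarrow> \<bar>h t\<bar> \<le> cosh t * exp (- r * cosh t)"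
  shows "set_integrable lborel {0..} h" and "\<bar>LBINT t:{0..}. h t\<bar> \<le> 2 * exp (- r / 2) / r"
proof -
  have "(\<integral>\<^sup>+t. ennreal (norm (indicator {0..} t *\<^sub>R h t)) \<partial>lborel)
      \<le> (\<integral>\<^sup>+t. ennreal (exp t * exp (- (r/2) * exp t)) * indicator {0..} t \<partial>lborel)"
    using h cosh_exp_neg_cosh_le[OF r]
    by (intro nn_integral_mono) (auto intro: order_trans split: split_indicator)
  also have "\<dots> = ennreal (2 * exp (- r / 2) / r)"
    using nn_integral_exp_exp_neg[of "r/2"] r by (simp add: field_simps)
  finally have bound: "(\<integral>\<^sup>+t. ennreal (norm (indicator {0..} t *\<^sub>R h t)) \<partial>lborel) \<le> ennreal (2 * exp (- r / 2) / r)" .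
  then show int: "set_integrable lborel {0..} h"
    unfolding set_integrable_def integrable_iff_bounded by (auto intro: order_le_less_trans)
  have "ennreal \<bar>LBINT t:{0..}. h t\<bar> \<le> (\<integral>\<^sup>+t. ennreal (norm (indicator {0..} t *\<^sub>R h t)) \<partial>lborel)"
    using integral_norm_bound_ennreal[OF int[unfolded set_integrable_def]]
    by (simp add: set_lebesgue_integral_def)
  from order_trans[OF this bound] show "\<bar>LBINT t:{0..}. h t\<bar> \<le> 2 * exp (- r / 2) / r"
    using r by (simp add: ennreal_le_iff)
qed

lemma K0_integrable: "0 < r \<Longrightarrow> set_integrable lborel {0..} (\<lambda>t::real. exp (- r * cosh t))"
  by (rule set_integral_dominated_by_K1_integrand(1)) (auto simp: cosh_real_ge_1)

lemma K0_bound: "0 < r \<Longrightarrow> \<bar>K0 r\<bar> \<le> 2 * exp (- r / 2) / r"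
  unfolding K0_def by (rule set_integral_dominated_by_K1_integrand) (auto simp: cosh_real_ge_1)

lemma K1_integrable: "0 < r \<Longrightarrow> set_integrable lborel {0..} (\<lambda>t::real. cosh t * exp (- r * cosh t))"
  by (rule set_integral_dominated_by_K1_integrand(1)) auto

lemma K1_bound: "0 < r \<Longrightarrow> \<bar>K1 r\<bar> \<le> 2 * exp (- r / 2) / r"
  unfolding K1_def by (rule set_integral_dominated_by_K1_integrand) auto

lemma DERIV_integral_dominated:
  fixes f :: "real \<Rightarrow> 'a \<Rightarrow> real" and f' w :: "'a \<Rightarrow> real"
  assumes d: "0 < d"
    and f_int: "\<And>x. \<bar>x - x0\<bar> < d \<Longrightarrow> integrable M (f x)"
    and [measurable]: "f' \<in> borel_measurable M"
    and deriv: "\<And>t. t \<in> space M \<Longrightarrow> ((\<lambda>x. f x t) has_real_derivative f' t) (at x0)"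
    and w: "integrable M w"
    and bound: "\<And>h t. h \<noteq> 0 \<Longrightarrow> \<bar>h\<bar> < d \<Longrightarrow> t \<in> space M \<Longrightarrow> \<bar>(f (x0 + h) t - f x0 t) / h\<bar> \<le> w t"
  shows "((\<lambda>x. \<integral>t. f x t \<partial>M) has_real_derivative (\<integral>t. f' t \<partial>M)) (at x0)"
  unfolding DERIV_def tendsto_at_iff_sequentially comp_def
proof (intro allI impI)
  fix X :: "nat \<Rightarrow> real"
  assume X: "\<forall>n. X n \<in> UNIV - {0}" and X_lim: "X \<longlonglongrightarrow> 0"
  have "\<forall>\<^sub>F n in sequentially. dist (X n) 0 < d"
    using X_lim d by (rule tendstoD)
  then obtain N where N: "\<And>n. N \<le> n \<Longrightarrow> \<bar>X n\<bar> < d"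
    by (auto simp: eventually_sequentially)
  define Y where "Y n = X (n + N)" for n
  have Y: "Y n \<noteq> 0" "\<bar>Y n\<bar> < d" for n using X N[of "n + N"] by (auto simp: Y_def)
  have Y_at: "filterlim Y (at 0) sequentially"
    using X_lim Y(1) unfolding Y_def
    by (intro filterlim_atI LIMSEQ_ignore_initial_segment) auto
  have quotient: "(\<integral>t. (f (x0 + Y n) t - f x0 t) / Y n \<partial>M)
      = ((\<integral>t. f (x0 + Y n) t \<partial>M) - (\<integral>t. f x0 t \<partial>M)) / Y n" for n
    using Y[of n] d by (simp add: f_int integral_diff)
  have "(\<lambda>n. \<integral>t. (f (x0 + Y n) t - f x0 t) / Y n \<partial>M) \<longlonglongrightarrow> (\<integral>t. f' t \<partial>M)"
  proof (rule integral_dominated_convergence[OF _ _ w])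
    show "(\<lambda>t. (f (x0 + Y n) t - f x0 t) / Y n) \<in> borel_measurable M" for n
    proof -
      have "f (x0 + Y n) \<in> borel_measurable M" "f x0 \<in> borel_measurable M"
        using Y[of n] d by (simp_all add: borel_measurable_integrable f_int)
      then show ?thesis by measurable
    qed
    show "AE t in M. (\<lambda>n. (f (x0 + Y n) t - f x0 t) / Y n) \<longlonglongrightarrow> f' t"
    proof (rule AE_I2)
      fix t assume "t \<in> space M"
      with deriv have "((\<lambda>h. (f (x0 + h) t - f x0 t) / h) \<longlongrightarrow> f' t) (at 0)"
        unfolding DERIV_def by blast
      from filterlim_compose[OF this Y_at]
      show "(\<lambda>n. (f (x0 + Y n) t - f x0 t) / Y n) \<longlonglongrightarrow> f' t" .
    qed
    show "AE t in M. norm ((f (x0 + Y n) t - f x0 t) / Y n) \<le> w t" for n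
      using Y[of n] bound by (intro AE_I2) (simp del: abs_divide)
  qed simp
  then have "(\<lambda>n. ((\<integral>t. f (x0 + Y n) t \<partial>M) - (\<integral>t. f x0 t \<partial>M)) / Y n)
      \<longlonglongrightarrow> (\<integral>t. f' t \<partial>M)"
    by (simp only: quotient)
  then show "(\<lambda>n. ((\<integral>t. f (x0 + X n) t \<partial>M) - (\<integral>t. f x0 t \<partial>M)) / X n) \<longlonglongrightarrow> (\<integral>t. f' t \<partial>M)"
    unfolding Y_def by (rule LIMSEQ_offset)
qed

lemma abs_exp_diff_le: "\<bar>exp u - exp v\<bar> \<le> \<bar>u - v\<bar> * exp (max u v)" for u v :: real
proof -
  have le: "exp b - exp a \<le> (b - a) * exp b" if "a \<le> b" for a b :: real
    using mult_left_mono[OF exp_ge_add_one_self[of "a - b"], of "exp b"]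
    by (simp add: exp_diff algebra_simps)
  show ?thesis
    using le[of u v] le[of v u] by (cases "u \<le> v") (auto simp: max_def abs_if)
qed

lemma K0_has_real_derivative:
  assumes r: "0 < r"
  shows "(K0 has_real_derivative - K1 r) (at r)"
proof -
  have "((\<lambda>x. \<integral>t. indicator {0..} t *\<^sub>R exp (- x * cosh t) \<partial>lborel) has_real_derivative
      (\<integral>t. indicator {0..} t *\<^sub>R (- (cosh t * exp (- r * cosh t))) \<partial>lborel)) (at r)"
  proof (rule DERIV_integral_dominated[where d="r/2"
      and w="\<lambda>t. indicator {0..} t *\<^sub>R (cosh t * exp (- (r/2) * cosh t))"])
    show "integrable lborel (\<lambda>t. indicator {0..} t *\<^sub>R exp (- x * cosh t))" if "\<bar>x - r\<bar> < r/2" for x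
    proof -
      have "0 < x" using that by linarith
      then show ?thesis using K0_integrable[of x] unfolding set_integrable_def by simp
    qed
    show "integrable lborel (\<lambda>t. indicator {0..} t *\<^sub>R (cosh t * exp (- (r/2) * cosh t)))"
      using K1_integrable[of "r/2"] r unfolding set_integrable_def by simp
    show "((\<lambda>x. indicator {0..} t *\<^sub>R exp (- x * cosh t)) has_real_derivative
        indicator {0..} t *\<^sub>R (- (cosh t * exp (- r * cosh t)))) (at r)" for t
      by (auto intro!: derivative_eq_intros)
    show "\<bar>(indicator {0..} t *\<^sub>R exp (- (r + h) * cosh t) - indicator {0..} t *\<^sub>R exp (- r * cosh t)) / h\<bar>
        \<le> indicator {0..} t *\<^sub>R (cosh t * exp (- (r/2) * cosh t))" if "h \<noteq> 0" "\<bar>h\<bar> < r/2" for h t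
    proof -
      have "\<bar>exp (- (r + h) * cosh t) - exp (- r * cosh t)\<bar>
          \<le> \<bar>h\<bar> * cosh t * exp (max (- (r + h) * cosh t) (- r * cosh t))"
        using abs_exp_diff_le[of "- (r + h) * cosh t" "- r * cosh t"]
        by (simp add: algebra_simps abs_mult)
      also have "\<dots> \<le> \<bar>h\<bar> * cosh t * exp (- (r/2) * cosh t)"
      proof -
        have "- (r + h) * cosh t \<le> - (r/2) * cosh t" "- r * cosh t \<le> - (r/2) * cosh t"
          using that r by (intro mult_right_mono; simp)+
        then show ?thesis by (intro mult_left_mono) auto
      qed
      finally show ?thesis
        using that by (simp add: abs_mult divide_le_eq mult.commute split: split_indicator)
    qed
  qed (use r in auto)
  then show ?thesis
    unfolding K0_def[abs_def] K1_def set_lebesgue_integral_def by (simp flip: integral_minus)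
qed

lemma K0'_eq: "0 < r \<Longrightarrow> K0' r = - K1 r"
  unfolding K0'_def by (rule DERIV_imp_deriv[OF K0_has_real_derivative])

section \<open>Integrable majorants on the plane\<close>

lemma nn_integral_abs_le_twice_half_line:
  fixes h :: "real \<Rightarrow> ennreal"
  assumes [measurable]: "h \<in> borel_measurable borel"
  shows "(\<integral>\<^sup>+t. h \<bar>t\<bar> \<partial>lborel) \<le> 2 * (\<integral>\<^sup>+t. h t * indicator {0..} t \<partial>lborel)"
proof -
  have "(\<integral>\<^sup>+t. h \<bar>t\<bar> \<partial>lborel)
      \<le> (\<integral>\<^sup>+t. h t * indicator {0..} t + h (- t) * indicator {0..} (- t) \<partial>lborel)"
    by (intro nn_integral_mono) (auto split: split_indicator)
  also have "\<dots> = (\<integral>\<^sup>+t. h t * indicator {0..} t \<partial>lborel) + (\<integral>\<^sup>+t. h (- t) * indicator {0..} (- t) \<partial>lborel)"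
    by (rule nn_integral_add) measurable
  also have "(\<integral>\<^sup>+t. h (- t) * indicator {0..} (- t) \<partial>lborel) = (\<integral>\<^sup>+t. h t * indicator {0..} t \<partial>lborel)"
    using nn_integral_real_affine[of "\<lambda>t. h t * indicator {0..} t" "-1" 0] by simp
  finally show ?thesis by (simp add: mult_2)
qed

lemma nn_integral_exp_neg_abs:
  assumes a: "0 < a"
  shows "(\<integral>\<^sup>+t. ennreal (exp (- a * \<bar>t\<bar>)) \<partial>lborel) \<le> ennreal (2 / a)"
proof -
  have "(\<integral>\<^sup>+t. ennreal (exp (- a * \<bar>t\<bar>)) \<partial>lborel)
      \<le> 2 * (\<integral>\<^sup>+t. ennreal (exp (- a * t)) * indicator {0..} t \<partial>lborel)"
    by (rule nn_integral_abs_le_twice_half_line[of "\<lambda>t. ennreal (exp (- a * t))"]) measurable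
  also have "\<dots> = ennreal (2 / a)"
    using a ennreal_mult[of 2 "1/a"] by (simp only: nn_integral_exp_neg) simp
  finally show ?thesis .
qed

lemma nn_integral_powr_neg_half_unit_interval:
  "(\<integral>\<^sup>+t. ennreal (indicator {0..1} t * t powr (-1/2)) \<partial>lborel) = 2"
proof -
  have "((\<lambda>t::real. t powr (-1/2)) has_integral 2) {0..1}"
    using has_integral_powr_from_0[of "-1/2" 1] by simp
  moreover have "(\<lambda>t::real. indicator {0..1} t * t powr (-1/2)) = (\<lambda>t. if t \<in> {0..1} then t powr (-1/2) else 0)"
    by (auto simp: indicator_def)
  ultimately have "((\<lambda>t::real. indicator {0..1} t * t powr (-1/2)) has_integral 2) UNIV"
    by (simp only: has_integral_restrict_UNIV)
  then show ?thesis
    by (subst nn_integral_has_integral_lborel) auto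
qed

text \<open>The value \<open>\<infinity>\<close> at \<open>t = 0\<close> makes the product estimate \<open>S_majorant_le_product\<close> hold on the
  coordinate axes as well.\<close>

definition exp_div_sqrt_abs :: "real \<Rightarrow> real \<Rightarrow> ennreal" where
  "exp_div_sqrt_abs a t = (if t = 0 then \<infinity> else ennreal (exp (- a * \<bar>t\<bar>) / sqrt \<bar>t\<bar>))"

lemma borel_measurable_exp_div_sqrt_abs [measurable]: "exp_div_sqrt_abs a \<in> borel_measurable borel"
  unfolding exp_div_sqrt_abs_def[abs_def] by measurable

lemma exp_div_sqrt_le:
  fixes a t :: real
  assumes "0 < a" "0 < t"
  shows "exp (- a * t) / sqrt t \<le> indicator {0..1} t * t powr (-1/2) + exp (- a * t)"
proof (cases "t \<le> 1")
  case True
  have "exp (- a * t) / sqrt t \<le> 1 / sqrt t"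
    using assms by (intro divide_right_mono) auto
  also have "\<dots> = t powr (-1/2)"
    using assms by (simp add: powr_minus_divide powr_half_sqrt[symmetric])
  finally have le: "exp (- a * t) / sqrt t \<le> t powr (-1/2)" .
  have "indicator {0..1} t = (1::real)" using True assms by simp
  then show ?thesis using add_increasing2[OF less_imp_le[OF exp_gt_zero] le] by simp
next
  case False
  then have "exp (- a * t) / sqrt t \<le> exp (- a * t)"
    by (simp add: divide_le_eq mult_le_cancel_left1)
  then show ?thesis using False by simp
qed

lemma nn_integral_exp_div_sqrt_abs_finite:
  assumes a: "0 < a"
  shows "(\<integral>\<^sup>+t. exp_div_sqrt_abs a t \<partial>lborel) < \<infinity>"
proof -
  have "(\<integral>\<^sup>+t. exp_div_sqrt_abs a t \<partial>lborel) = (\<integral>\<^sup>+t. ennreal (exp (- a * \<bar>t\<bar>) / sqrt \<bar>t\<bar>) \<partial>lborel)"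
    using AE_lborel_singleton[of 0]
    by (intro nn_integral_cong_AE) (auto elim!: eventually_mono simp: exp_div_sqrt_abs_def)
  also have "\<dots> \<le> 2 * (\<integral>\<^sup>+t. ennreal (exp (- a * t) / sqrt t) * indicator {0..} t \<partial>lborel)"
    by (rule nn_integral_abs_le_twice_half_line[of "\<lambda>t. ennreal (exp (- a * t) / sqrt t)"]) measurable
  finally have symm: "(\<integral>\<^sup>+t. exp_div_sqrt_abs a t \<partial>lborel)
      \<le> 2 * (\<integral>\<^sup>+t. ennreal (exp (- a * t) / sqrt t) * indicator {0..} t \<partial>lborel)" .
  have "(\<integral>\<^sup>+t. ennreal (exp (- a * t) / sqrt t) * indicator {0..} t \<partial>lborel)
      \<le> (\<integral>\<^sup>+t. ennreal (indicator {0..1} t * t powr (-1/2)) + ennreal (exp (- a * t)) * indicator {0..} t \<partial>lborel)"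
  proof (intro nn_integral_mono)
    fix t :: real
    show "ennreal (exp (- a * t) / sqrt t) * indicator {0..} t
        \<le> ennreal (indicator {0..1} t * t powr (-1/2)) + ennreal (exp (- a * t)) * indicator {0..} t"
    proof (cases "0 < t")
      case True
      then show ?thesis
        using exp_div_sqrt_le[OF a True] by (simp flip: ennreal_plus add: ennreal_leI)
    qed (cases "t = 0"; simp add: indicator_def)
  qed
  also have "\<dots> = (\<integral>\<^sup>+t. ennreal (indicator {0..1} t * t powr (-1/2)) \<partial>lborel)
      + (\<integral>\<^sup>+t. ennreal (exp (- a * t)) * indicator {0..} t \<partial>lborel)"
    by (rule nn_integral_add) measurable
  also have "\<dots> = 2 + ennreal (1 / a)"
    by (simp only: nn_integral_powr_neg_half_unit_interval nn_integral_exp_neg[OF a])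
  finally have "2 * (\<integral>\<^sup>+t. ennreal (exp (- a * t) / sqrt t) * indicator {0..} t \<partial>lborel) < \<infinity>"
    by (auto simp: ennreal_mult_less_top intro: order_le_less_trans)
  with symm show ?thesis by (rule order_le_less_trans)
qed

lemma nn_integral_real2_product:
  fixes g :: "real \<Rightarrow> ennreal"
  assumes [measurable]: "g \<in> borel_measurable borel"
  shows "(\<integral>\<^sup>+y. g (y$1) * g (y$2) \<partial>(lborel::(real^2) measure)) = (\<integral>\<^sup>+t. g t \<partial>lborel) ^ 2"
proof -
  have "axis i 1 = axis 1 (1::real) \<or> axis i 1 = (axis 2 1 :: real^2)" for i :: 2
    using exhaust_2[of i] by auto
  then have Basis: "(Basis :: (real^2) set) = {axis 1 1, axis 2 1}"
    by (auto simp: Basis_vec_def)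
  have axis_neq: "axis 1 (1::real) \<noteq> (axis 2 1 :: real^2)" by (simp add: axis_eq_axis)
  have "(\<integral>\<^sup>+y. (\<Prod>b\<in>Basis. g (y \<bullet> b)) \<partial>(lborel::(real^2) measure))
      = (\<Prod>b\<in>(Basis::(real^2) set). \<integral>\<^sup>+t. g t \<partial>lborel)"
    by (rule nn_integral_lborel_prod) auto
  then show ?thesis using axis_neq by (simp add: Basis inner_axis power2_eq_square)
qed

definition S_majorant :: "real \<Rightarrow> real^2 \<Rightarrow> real" where
  "S_majorant s y = 6 * (exp (- s * norm y / 2) / norm y)"

definition T_majorant :: "real \<Rightarrow> real \<Rightarrow> real^2 \<Rightarrow> real" where
  "T_majorant b s y = 12 * b * exp (- s * norm y / 2)"

lemma borel_measurable_S_majorant [measurable]: "S_majorant s \<in> borel_measurable borel"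
  unfolding S_majorant_def[abs_def] by measurable

lemma borel_measurable_T_majorant [measurable]: "T_majorant b s \<in> borel_measurable borel"
  unfolding T_majorant_def[abs_def] by measurable

lemma exp_neg_norm_le_product:
  fixes y :: "real^2"
  assumes "0 < s"
  shows "exp (- s * norm y / 2) \<le> exp (- (s/4) * \<bar>y$1\<bar>) * exp (- (s/4) * \<bar>y$2\<bar>)"
proof -
  have "\<bar>y$1\<bar> + \<bar>y$2\<bar> \<le> 2 * norm y"
    using component_le_norm_cart[of y 1] component_le_norm_cart[of y 2] by linarith
  then have "s * (\<bar>y$1\<bar> + \<bar>y$2\<bar>) \<le> s * (2 * norm y)"
    using assms by (intro mult_left_mono) auto
  then show ?thesis by (simp add: exp_add[symmetric] field_simps)
qed

lemma nn_integral_T_majorant: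
  assumes s: "0 < s" and b: "0 \<le> b"
  shows "(\<integral>\<^sup>+y. T_majorant b s y \<partial>lborel) \<le> ennreal (768 * b / s^2)"
proof -
  have "(\<integral>\<^sup>+y. T_majorant b s y \<partial>lborel)
      \<le> (\<integral>\<^sup>+y. ennreal (12 * b) * (ennreal (exp (- (s/4) * \<bar>y$1\<bar>)) * ennreal (exp (- (s/4) * \<bar>y$2\<bar>))) \<partial>(lborel::(real^2) measure))"
    using exp_neg_norm_le_product[OF s] b
    by (intro nn_integral_mono) (simp add: T_majorant_def ennreal_mult'[symmetric] ennreal_leI mult_left_mono)
  also have "\<dots> = ennreal (12 * b) * (\<integral>\<^sup>+t. ennreal (exp (- (s/4) * \<bar>t\<bar>)) \<partial>lborel) ^ 2"
    by (subst nn_integral_cmult)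
       (simp_all add: nn_integral_real2_product[of "\<lambda>t. ennreal (exp (- (s/4) * \<bar>t\<bar>))", simplified])
  also have "\<dots> \<le> ennreal (12 * b) * ennreal (2 / (s/4)) ^ 2"
    using s by (intro mult_left_mono power_mono nn_integral_exp_neg_abs) auto
  also have "\<dots> = ennreal (768 * b / s^2)"
    using s b by (simp add: ennreal_power ennreal_mult[symmetric] power_divide field_simps)
  finally show ?thesis .
qed

lemma S_majorant_le_product:
  fixes y :: "real^2"
  assumes s: "0 < s"
  shows "ennreal (S_majorant s y) \<le> 6 * (exp_div_sqrt_abs (s/4) (y$1) * exp_div_sqrt_abs (s/4) (y$2))"
proof (cases "y$1 = 0 \<or> y$2 = 0")
  case True
  have "exp_div_sqrt_abs (s/4) t \<noteq> 0" for t
    by (simp add: exp_div_sqrt_abs_def)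
  then have "exp_div_sqrt_abs (s/4) (y$1) * exp_div_sqrt_abs (s/4) (y$2) = \<infinity>"
    using True by (auto simp: exp_div_sqrt_abs_def)
  then show ?thesis by simp
next
  case False
  have "sqrt (\<bar>y$1\<bar> * \<bar>y$2\<bar>) \<le> sqrt (norm y * norm y)"
    using component_le_norm_cart[of y 1] component_le_norm_cart[of y 2]
    by (intro real_sqrt_le_mono mult_mono) auto
  then have "sqrt \<bar>y$1\<bar> * sqrt \<bar>y$2\<bar> \<le> norm y"
    by (simp add: real_sqrt_mult)
  then have "1 / norm y \<le> 1 / (sqrt \<bar>y$1\<bar> * sqrt \<bar>y$2\<bar>)"
  proof (rule divide_left_mono)
    have "y \<noteq> 0" using False by auto
    then show "0 < norm y * (sqrt \<bar>y$1\<bar> * sqrt \<bar>y$2\<bar>)" using False by simp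
  qed simp_all
  with exp_neg_norm_le_product[OF s, of y]
  have "exp (- s * norm y / 2) * (1 / norm y)
      \<le> (exp (- (s/4) * \<bar>y$1\<bar>) * exp (- (s/4) * \<bar>y$2\<bar>)) * (1 / (sqrt \<bar>y$1\<bar> * sqrt \<bar>y$2\<bar>))"
    by (rule mult_mono) auto
  moreover define p where "p i = exp (- (s/4) * \<bar>y$i\<bar>) / sqrt \<bar>y$i\<bar>" for i
  ultimately have "S_majorant s y \<le> 6 * (p 1 * p 2)"
    by (simp add: S_majorant_def p_def)
  then have "ennreal (S_majorant s y) \<le> ennreal (6 * (p 1 * p 2))"
    by (rule ennreal_leI)
  also have "\<dots> = 6 * (ennreal (p 1) * ennreal (p 2))"
    using ennreal_mult[of 6 "p 1 * p 2"] ennreal_mult[of "p 1" "p 2"] by (simp add: p_def)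
  also have "\<dots> = 6 * (exp_div_sqrt_abs (s/4) (y$1) * exp_div_sqrt_abs (s/4) (y$2))"
    using False by (simp add: exp_div_sqrt_abs_def p_def)
  finally show ?thesis .
qed

lemma nn_integral_S_majorant_finite:
  assumes s: "0 < s"
  shows "(\<integral>\<^sup>+y. S_majorant s y \<partial>lborel) < \<infinity>"
proof -
  have "(\<integral>\<^sup>+y. S_majorant s y \<partial>lborel)
      \<le> (\<integral>\<^sup>+y. 6 * (exp_div_sqrt_abs (s/4) (y$1) * exp_div_sqrt_abs (s/4) (y$2)) \<partial>(lborel::(real^2) measure))"
    by (intro nn_integral_mono S_majorant_le_product s)
  also have "\<dots> = 6 * (\<integral>\<^sup>+t. exp_div_sqrt_abs (s/4) t \<partial>lborel) ^ 2"
    by (subst nn_integral_cmult) (simp_all add: nn_integral_real2_product)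
  also have "\<dots> < \<infinity>"
    using nn_integral_exp_div_sqrt_abs_finite[of "s/4"] s
    by (simp add: ennreal_mult_less_top power_less_top_ennreal)
  finally show ?thesis .
qed

section \<open>The kernels of S_b and T_b\<close>

lemma E_borel: "E \<in> sets borel"
  unfolding E_def by (intro borel_closed closed_halfspace_component_ge_cart)

lemma reflect2_eq: "reflect2 x = x - (2 * x$2) *\<^sub>R axis 2 1"
  unfolding reflect2_def by (simp add: vec_eq_iff forall_2 axis_def)

lemma Atilde_eq: "Atilde z = (- (z$2)) *\<^sub>R axis 1 1"
  unfolding Atilde_def by (simp add: vec_eq_iff forall_2 axis_def)

text \<open>Replacing \<open>K0' = deriv K0\<close> by \<open>-K1\<close> makes the kernel measurable by the standard rules.\<close>

definition Kfrak0_profile :: "real \<Rightarrow> real^2 \<Rightarrow> complex^2^2" where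
  "Kfrak0_profile s z =
     (\<i> * complex_of_real s / (2 * complex_of_real pi) * complex_of_real (K0 (s * norm z))) *c id2
   - (\<i> * complex_of_real s / (2 * complex_of_real pi) * complex_of_real (if z = 0 then 0 else - K1 (s * norm z)))
       *c ((z$1 / norm z) *\<^sub>R pauli1 + (z$2 / norm z) *\<^sub>R pauli2)"

lemma borel_measurable_Kfrak0_profile [measurable]: "Kfrak0_profile s \<in> borel_measurable borel"
  unfolding Kfrak0_profile_def[abs_def] by measurable

lemma Kfrak0_eq_profile: "0 < s \<Longrightarrow> Kfrak0 x x' s = Kfrak0_profile s (x - x')"
  by (cases "x = x'")
     (simp_all add: Kfrak0_def Kfrak0_profile_def sigma_dot_def cscale_def K0'_eq vec_eq_iff)

lemma borel_measurable_S_kernel: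
  assumes "0 < s"
  shows "(\<lambda>p. S_kernel b s (fst p) (snd p)) \<in> borel_measurable (lebesgue_on E \<Otimes>\<^sub>M lebesgue_on E)"
proof -
  note [measurable] = borel_measurable_ident_lebesgue_on[of E]
  show ?thesis
    using assms by (simp add: S_kernel_def KfrakE_def phi2_def Kfrak0_eq_profile reflect2_eq) measurable
qed

lemma borel_measurable_T_kernel:
  assumes "0 < s"
  shows "(\<lambda>p. T_kernel b s (fst p) (snd p)) \<in> borel_measurable (lebesgue_on E \<Otimes>\<^sub>M lebesgue_on E)"
proof -
  note [measurable] = borel_measurable_ident_lebesgue_on[of E]
  show ?thesis
    using assms
    by (simp add: T_kernel_def KfrakE_def phi2_def Kfrak0_eq_profile reflect2_eq Atilde_eq sigma_dot_def)
       measurable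
qed

lemma mat_l1_norm_Kfrak0_le:
  assumes s: "0 < s" and "x \<noteq> x'"
  shows "mat_l1_norm (Kfrak0 x x' s) \<le> 2 * (exp (- s * norm (x - x') / 2) / norm (x - x'))"
proof -
  define n where "n = norm (x - x')"
  define Q where "Q = exp (- s * n / 2) / n"
  define c where "c = s / (2 * pi)"
  have n: "0 < n" using assms(2) by (simp add: n_def)
  have r: "0 < s * n" using s n by simp
  have "2 * exp (- (s * n) / 2) / (s * n) = 2 * Q / s"
    using s n by (simp add: Q_def field_simps)
  then have K0: "\<bar>K0 (s * n)\<bar> \<le> 2 * Q / s" and K0': "\<bar>K0' (s * n)\<bar> \<le> 2 * Q / s"
    using K0_bound[OF r] K1_bound[OF r] by (simp_all add: K0'_eq[OF r])
  have sigma: "mat_l1_norm (sigma_dot ((1 / n) *\<^sub>R (x - x'))) \<le> 4"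
    using n by (intro mat_l1_norm_sigma_dot_unit) (simp add: n_def)
  define \<kappa> where "\<kappa> t = \<i> * complex_of_real s / (2 * complex_of_real pi) * complex_of_real t" for t
  have \<kappa>: "norm (\<kappa> t) = c * \<bar>t\<bar>" for t
    using s by (simp add: \<kappa>_def c_def norm_mult norm_divide)
  have "Kfrak0 x x' s = \<kappa> (K0 (s * n)) *c id2 - \<kappa> (K0' (s * n)) *c sigma_dot ((1 / n) *\<^sub>R (x - x'))"
    by (simp add: Kfrak0_def \<kappa>_def n_def)
  then have "mat_l1_norm (Kfrak0 x x' s)
      \<le> c * \<bar>K0 (s * n)\<bar> * 2 + c * \<bar>K0' (s * n)\<bar> * mat_l1_norm (sigma_dot ((1 / n) *\<^sub>R (x - x')))"
    using mat_l1_norm_diff[of "\<kappa> (K0 (s * n)) *c id2" "\<kappa> (K0' (s * n)) *c sigma_dot ((1 / n) *\<^sub>R (x - x'))"]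
    by (simp add: mat_l1_norm_cscale mat_l1_norm_id2 \<kappa> mult_ac)
  also have "\<dots> \<le> c * (2 * Q / s) * 2 + c * (2 * Q / s) * 4"
    using K0 K0' sigma s n
    by (intro add_mono mult_mono mult_left_mono mat_l1_norm_nonneg) (auto simp: c_def Q_def)
  also have "\<dots> = (6 / pi) * Q"
    using s by (simp add: c_def field_simps)
  also have "\<dots> \<le> 2 * Q"
    using pi_gt3 n by (intro mult_right_mono) (auto simp: Q_def field_simps)
  finally show ?thesis by (simp add: Q_def n_def)
qed

lemma norm_diff_le_norm_diff_reflect2:
  assumes "x \<in> E" "x' \<in> E"
  shows "norm (x - x') \<le> norm (x - reflect2 x')"
proof -
  have "(x$2 - x'$2)^2 \<le> (x$2 + x'$2)^2"
    using assms by (simp add: E_def power2_eq_square algebra_simps)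
  then show ?thesis
    by (simp add: norm_vec_def L2_set_def sum_2 reflect2_def real_sqrt_le_mono)
qed

lemma mat_l1_norm_KfrakE_le:
  assumes s: "0 < s" and E: "x \<in> E" "x' \<in> E" and "x \<noteq> x'"
  shows "mat_l1_norm (KfrakE x x' s) \<le> S_majorant s (x - x')"
proof -
  define n where "n = norm (x - x')"
  have n: "0 < n" using assms(4) by (simp add: n_def)
  have reflect: "n \<le> norm (x - reflect2 x')"
    unfolding n_def by (rule norm_diff_le_norm_diff_reflect2[OF E])
  have decay_mono: "exp (- s * m / 2) / m \<le> exp (- s * n / 2) / n" if "n \<le> m" for m
    using that n s by (intro frac_le) (auto simp: mult_left_mono)
  have "x \<noteq> reflect2 x'" using reflect n by auto
  then have "mat_l1_norm (Kfrak0 x (reflect2 x') s)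
      \<le> 2 * (exp (- s * norm (x - reflect2 x') / 2) / norm (x - reflect2 x'))"
    by (rule mat_l1_norm_Kfrak0_le[OF s])
  also have "\<dots> \<le> 2 * (exp (- s * n / 2) / n)"
    using decay_mono[OF reflect] by simp
  finally have "mat_l1_norm (Kfrak0 x (reflect2 x') s) \<le> 2 * (exp (- s * n / 2) / n)" .
  moreover have "mat_l1_norm (Kfrak0 x x' s) \<le> 2 * (exp (- s * n / 2) / n)"
    using mat_l1_norm_Kfrak0_le[OF s assms(4)] by (simp add: n_def)
  moreover have "mat_l1_norm (KfrakE x x' s) \<le> mat_l1_norm (Kfrak0 x (reflect2 x') s) * 2 + mat_l1_norm (Kfrak0 x x' s)"
    using mat_l1_norm_add[of "Kfrak0 x (reflect2 x') s ** pauli1" "Kfrak0 x x' s"]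
      mat_l1_norm_mult[of "Kfrak0 x (reflect2 x') s" pauli1]
    by (simp add: KfrakE_def mat_l1_norm_pauli1)
  ultimately show ?thesis by (simp add: S_majorant_def n_def)
qed

lemma mat_l1_norm_S_kernel_le:
  assumes "0 < s" "x \<in> E" "x' \<in> E" "x \<noteq> x'"
  shows "mat_l1_norm (S_kernel b s x x') \<le> S_majorant s (x - x')"
  using mat_l1_norm_KfrakE_le[OF assms]
  by (simp add: S_kernel_def mat_l1_norm_cscale norm_exp_i_times)

lemma mat_l1_norm_T_kernel_le:
  assumes s: "0 < s" and b: "0 \<le> b" and E: "x \<in> E" "x' \<in> E" and "x \<noteq> x'"
  shows "mat_l1_norm (T_kernel b s x x') \<le> T_majorant b s (x - x')"
proof -
  define n where "n = norm (x - x')"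
  have n: "0 < n" using assms(5) by (simp add: n_def)
  have "mat_l1_norm (sigma_dot (- b *\<^sub>R Atilde (x - x'))) \<le> 2 * (b * \<bar>(x - x')$2\<bar>)"
    using mat_l1_norm_sigma_dot[of "- b *\<^sub>R Atilde (x - x')"] b by (simp add: Atilde_def abs_mult abs_minus_commute)
  also have "\<dots> \<le> 2 * (b * n)"
    using b component_le_norm_cart[of "x - x'" 2] by (simp add: n_def mult_left_mono)
  finally have A: "mat_l1_norm (sigma_dot (- b *\<^sub>R Atilde (x - x'))) \<le> 2 * (b * n)" .
  have K: "mat_l1_norm (KfrakE x x' s) \<le> 6 * (exp (- s * n / 2) / n)"
    using mat_l1_norm_KfrakE_le[OF s E assms(5)] by (simp add: S_majorant_def n_def)
  have "mat_l1_norm (T_kernel b s x x') \<le> mat_l1_norm (sigma_dot (- b *\<^sub>R Atilde (x - x'))) * mat_l1_norm (KfrakE x x' s)"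
    using mat_l1_norm_mult by (simp add: T_kernel_def mat_l1_norm_cscale norm_exp_i_times)
  also have "\<dots> \<le> (2 * (b * n)) * (6 * (exp (- s * n / 2) / n))"
    using A K b n by (intro mult_mono mat_l1_norm_nonneg) auto
  also have "\<dots> = T_majorant b s (x - x')"
    using n by (simp add: T_majorant_def n_def)
  finally show ?thesis .
qed

lemma AE_lebesgue_on_neq:
  fixes x :: "'a::euclidean_space"
  assumes "S \<in> sets borel"
  shows "AE x' in lebesgue_on S. x' \<noteq> x"
  using AE_completion[OF AE_lborel_singleton[of x]] assms
  by (subst AE_restrict_space_iff) (auto elim: eventually_mono)

lemma AE_dominated_off_diagonal:
  assumes "x \<in> E" and dom: "\<And>x'. x' \<in> E \<Longrightarrow> x \<noteq> x' \<Longrightarrow> mat_l1_norm (K x x') \<le> k (x - x')"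
  shows "AE x' in lebesgue_on E. mat_l1_norm (K x x') \<le> k (x - x')"
  using AE_lebesgue_on_neq[OF E_borel, of x] AE_space[of "lebesgue_on E"]
  by eventually_elim (auto intro: dom)

lemma bounded_int_op_S_kernel:
  assumes s: "0 < s"
  shows "\<exists>M. bounded_int_op E (S_kernel b s) M"
proof -
  define M where "M = enn2real (\<integral>\<^sup>+y. S_majorant s y \<partial>lborel)"
  have "bounded_int_op E (S_kernel b s) M"
  proof (rule bounded_int_op_convolution_dominated[OF E_borel borel_measurable_S_kernel[OF s]])
    show "(\<integral>\<^sup>+y. S_majorant s y \<partial>lborel) \<le> ennreal M"
      using nn_integral_S_majorant_finite[OF s] by (simp add: M_def)
    show "AE x' in lebesgue_on E. mat_l1_norm (S_kernel b s x x') \<le> S_majorant s (x - x')" if "x \<in> E" for x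
      using that s by (intro AE_dominated_off_diagonal mat_l1_norm_S_kernel_le)
  qed (auto simp: S_majorant_def M_def)
  then show ?thesis ..
qed

lemma bounded_int_op_T_kernel:
  assumes s: "0 < s" and b: "0 \<le> b"
  shows "bounded_int_op E (T_kernel b s) (768 * b / s^2)"
proof (rule bounded_int_op_convolution_dominated[OF E_borel borel_measurable_T_kernel[OF s]])
  show "(\<integral>\<^sup>+y. T_majorant b s y \<partial>lborel) \<le> ennreal (768 * b / s^2)"
    by (rule nn_integral_T_majorant[OF s b])
  show "AE x' in lebesgue_on E. mat_l1_norm (T_kernel b s x x') \<le> T_majorant b s (x - x')" if "x \<in> E" for x
    using that s b by (intro AE_dominated_off_diagonal mat_l1_norm_T_kernel_le)
qed (use b in \<open>auto simp: T_majorant_def\<close>)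

theorem lemma2p2:
  shows "(\<forall>b lam. b \<ge> 0 \<longrightarrow> lam > 0 \<longrightarrow>
            (\<exists>M. bounded_int_op E (S_kernel b (sqrt lam)) M) \<and>
            (\<exists>M. bounded_int_op E (T_kernel b (sqrt lam)) M)) \<and>
         (\<exists>C>0. \<forall>b lam. b > 0 \<longrightarrow> lam > 0 \<longrightarrow>
            bounded_int_op E (T_kernel b (sqrt lam)) (C * b / lam))"
proof -
  have T: "bounded_int_op E (T_kernel b (sqrt lam)) (768 * b / lam)" if "0 \<le> b" "0 < lam" for b lam
    using bounded_int_op_T_kernel[of "sqrt lam" b] that by simp
  show ?thesis
  proof (intro conjI allI impI)
    fix b lam :: real
    assume "0 \<le> b" "0 < lam"
    then show "\<exists>M. bounded_int_op E (S_kernel b (sqrt lam)) M"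
      by (intro bounded_int_op_S_kernel) simp
    from T[OF \<open>0 \<le> b\<close> \<open>0 < lam\<close>]
    show "\<exists>M. bounded_int_op E (T_kernel b (sqrt lam)) M" ..
  next
    show "\<exists>C>0. \<forall>b lam. b > 0 \<longrightarrow> lam > 0 \<longrightarrow> bounded_int_op E (T_kernel b (sqrt lam)) (C * b / lam)"
      using T by (intro exI[of _ 768]) auto
  qed
qed

end
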